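(* Let $N'$ be a positive integer. For every integer $c$ with $1\le c\le 2N'-1$ and every $s\in\mathbb{C}$ with $\Re(s)>2$, $$\zeta(-c,s+c)=\sum_{d=1}^{N'}\frac{a_{c+1,d}}{2}\,T(-d+1,-d+1;s+2d-2).$$
   Context: For $\Re(s)>2$ and an integer $c\ge0$, $\zeta(-c,s+c)=\sum_{1\le n_1<n_2} n_1^{c}n_2^{-s-c}=\sum_{m,n\ge1}m^c(m+n)^{-s-c}$ (Euler–Zagier double zeta function). $T(s_1,s_2;s):=\sum_{m,n\ge1} m^{-s_1}n^{-s_2}(m+n)^{-s}$ is the Tornheim double zeta function. $(a_{c,d})_{c,d\ge1}$ are the integers defined by: $a_{c,1}=1$ for $c\ge1$; $a_{1,d}=a_{2,d}=0$ for $d\ge2$; $a_{3,2}=-2$ and $a_{3,d}=0$ for $d\ge3$; and $a_{c+2,d+1}=a_{c+1,d+1}-a_{c,d}$ for $c\ge2$, $d\ge1$. *)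

theory Defs
  imports "HOL-Analysis.Analysis"
begin

definition EZ_zeta2 :: "complex \<Rightarrow> complex \<Rightarrow> complex" where
  "EZ_zeta2 s1 s2 =
     infsum (\<lambda>(n1, n2). of_nat n1 powr (-s1) * of_nat n2 powr (-s2))
            {(n1, n2). 1 \<le> n1 \<and> n1 < (n2::nat)}"

definition tornheim :: "complex \<Rightarrow> complex \<Rightarrow> complex \<Rightarrow> complex" where
  "tornheim s1 s2 s =
     infsum (\<lambda>(m, n). of_nat m powr (-s1) * of_nat n powr (-s2) * of_nat (m + n) powr (-s))
            ({1..} \<times> {1..} :: (nat \<times> nat) set)"

fun acoef :: "nat \<Rightarrow> nat \<Rightarrow> int" where
  "acoef 0 d = 0"
| "acoef (Suc c) 0 = 0"
| "acoef (Suc c) (Suc 0) = 1"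
| "acoef (Suc 0) (Suc (Suc d)) = 0"
| "acoef (Suc (Suc 0)) (Suc (Suc d)) = 0"
| "acoef (Suc (Suc (Suc 0))) (Suc (Suc 0)) = -2"
| "acoef (Suc (Suc (Suc 0))) (Suc (Suc (Suc d))) = 0"
| "acoef (Suc (Suc (Suc (Suc c)))) (Suc (Suc d)) =
     acoef (Suc (Suc (Suc c))) (Suc (Suc d)) - acoef (Suc (Suc c)) (Suc d)"

end

theory Submission
  imports Defs
begin

text \<open>With t = x + y and p = x y, the power sums u(c) = x^c + y^c satisfy
  u(c+2) = t u(c+1) - p u(c), the recurrence that defines a(c,d); hence
  x^c + y^c = sum over d of a(c+1,d+1) p^d t^(c-2d). On the other side, zeta(s1,s2) = T(s1,0;s2)
  and T is symmetric in its first two arguments, so 2 zeta(-c,s+c) is the sum over m, n of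
  (m^c + n^c) (m+n)^(-s-c). Expanding m^c + n^c by the identity above turns every summand into a
  combination of Tornheim summands. All series involved converge absolutely, being dominated by
  the sum of (m+n)^(-Re s) with Re s > 2.\<close>

lemma acoef_eq_0: "1 \<le> c \<Longrightarrow> c + 1 < 2 * d \<Longrightarrow> acoef c d = 0"
  by (induction c d rule: acoef.induct) auto

lemma acoef_rec:
  "1 \<le> c \<Longrightarrow> acoef (c + 3) (d + 2) = acoef (c + 2) (d + 2) - acoef (c + 1) (d + 1)"
  by (cases c) (auto simp: numeral_eq_Suc)

text \<open>For \<open>c < 2 K\<close> the cut-off at \<open>K\<close> drops only zero coefficients, and the exponent
  \<open>c - 2 d\<close> is truncated only in terms whose coefficient is zero.\<close>
definition acoef_poly :: "nat \<Rightarrow> nat \<Rightarrow> 'a::comm_ring_1 \<Rightarrow> 'a \<Rightarrow> 'a" where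
  "acoef_poly K c t p = (\<Sum>d<K. of_int (acoef (c + 1) (d + 1)) * p ^ d * t ^ (c - 2 * d))"

lemma acoef_poly_1:
  assumes "1 \<le> K"
  shows "acoef_poly K 1 t p = t"
proof -
  obtain K' where K: "K = Suc K'" using assms by (cases K) auto
  show ?thesis unfolding acoef_poly_def K sum.lessThan_Suc_shift by (simp add: numeral_eq_Suc)
qed

lemma acoef_poly_2:
  assumes "2 \<le> K"
  shows "acoef_poly K 2 t p = t ^ 2 - 2 * p"
proof -
  obtain K' where K: "K = Suc (Suc K')" using assms by (metis add_2_eq_Suc le_Suc_ex)
  show ?thesis
    unfolding acoef_poly_def K sum.lessThan_Suc_shift by (simp add: numeral_eq_Suc power2_eq_square)
qed

lemma times_acoef_term:
  "t * (of_int (acoef (c + 2) (d + 1)) * p ^ d * t ^ (c + 1 - 2 * d)) =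
   of_int (acoef (c + 2) (d + 1)) * p ^ d * (t ^ (c + 2 - 2 * d) :: 'a::comm_ring_1)"
proof (cases "2 * d \<le> c + 1")
  case True
  then have "c + 2 - 2 * d = Suc (c + 1 - 2 * d)" by simp
  then show ?thesis by (simp add: algebra_simps)
next
  case False
  then show ?thesis by (simp add: acoef_eq_0)
qed

lemma acoef_poly_rec:
  assumes "1 \<le> c" "c + 2 < 2 * K"
  shows "acoef_poly K (c + 2) t p = t * acoef_poly K (c + 1) t p - p * acoef_poly K c t p"
proof -
  obtain K' where K: "K = Suc K'" using assms(2) by (cases K) auto
  define u where "u e = p ^ (e + 1) * t ^ (c - 2 * e)" for e
  have "acoef_poly K (c + 2) t p = t ^ (c + 2) + (\<Sum>e<K'. of_int (acoef (c + 3) (e + 2)) * u e)"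
    unfolding acoef_poly_def K sum.lessThan_Suc_shift by (simp add: u_def numeral_eq_Suc mult.assoc)
  also have "\<dots> = t ^ (c + 2)
      + (\<Sum>e<K'. (of_int (acoef (c + 2) (e + 2)) - of_int (acoef (c + 1) (e + 1))) * u e)"
    by (simp only: acoef_rec[OF assms(1)] of_int_diff)
  also have "\<dots> = t ^ (c + 2) + (\<Sum>e<K'. of_int (acoef (c + 2) (e + 2)) * u e)
      - (\<Sum>e<K'. of_int (acoef (c + 1) (e + 1)) * u e)"
    by (simp add: left_diff_distrib sum_subtractf)
  also have "t ^ (c + 2) + (\<Sum>e<K'. of_int (acoef (c + 2) (e + 2)) * u e)
      = t * acoef_poly K (c + 1) t p"
  proof -
    have "t * acoef_poly K (c + 1) t p =
        (\<Sum>d<K. t * (of_int (acoef (c + 2) (d + 1)) * p ^ d * t ^ (c + 1 - 2 * d)))"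
      by (simp add: acoef_poly_def sum_distrib_left)
    also have "\<dots> = (\<Sum>d<K. of_int (acoef (c + 2) (d + 1)) * p ^ d * t ^ (c + 2 - 2 * d))"
      by (simp only: times_acoef_term)
    finally show ?thesis
      unfolding K sum.lessThan_Suc_shift by (simp add: u_def numeral_eq_Suc algebra_simps)
  qed
  also have "(\<Sum>e<K'. of_int (acoef (c + 1) (e + 1)) * u e) = p * acoef_poly K c t p"
    using assms by (simp add: acoef_poly_def K u_def sum_distrib_left acoef_eq_0 algebra_simps)
  finally show ?thesis .
qed

lemma power_sum_eq_acoef_poly:
  fixes x y :: "'a::comm_ring_1"
  assumes "1 \<le> c" "c < 2 * K"
  shows "x ^ c + y ^ c = acoef_poly K c (x + y) (x * y)"
  using assms
proof (induction c rule: less_induct)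
  case (less c)
  consider "c = 1" | "c = 2" | c' where "c = c' + 2" "1 \<le> c'"
  proof -
    have "c = 1 \<or> c = 2 \<or> (\<exists>c'. c = c' + 2 \<and> 1 \<le> c')" using less.prems(1) by presburger
    then show ?thesis using that by blast
  qed
  then show ?case
  proof cases
    case 1
    with less.prems acoef_poly_1[of K "x + y" "x * y"] show ?thesis by simp
  next
    case 2
    with less.prems acoef_poly_2[of K "x + y" "x * y"] show ?thesis
      by (simp add: power2_eq_square algebra_simps)
  next
    case 3
    have "x ^ c + y ^ c = (x + y) * (x ^ (c' + 1) + y ^ (c' + 1)) - x * y * (x ^ c' + y ^ c')"
      using 3 by (simp add: algebra_simps)
    also have "\<dots> = (x + y) * acoef_poly K (c' + 1) (x + y) (x * y)
        - x * y * acoef_poly K c' (x + y) (x * y)"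
      using less.IH[of "c' + 1"] less.IH[of c'] 3 less.prems by simp
    also have "\<dots> = acoef_poly K c (x + y) (x * y)"
      unfolding \<open>c = c' + 2\<close> using 3 less.prems by (intro acoef_poly_rec[symmetric]) auto
    finally show ?thesis .
  qed
qed

lemma summable_on_product_nonneg:
  fixes f :: "'a \<Rightarrow> real" and g :: "'b \<Rightarrow> real"
  assumes "f summable_on A" "g summable_on B"
    and "\<And>x. x \<in> A \<Longrightarrow> f x \<ge> 0" "\<And>y. y \<in> B \<Longrightarrow> g y \<ge> 0"
  shows "(\<lambda>(x, y). f x * g y) summable_on A \<times> B"
proof -
  have "(\<lambda>z. f (fst z) * g (snd z)) summable_on Sigma A (\<lambda>_. B)"
  proof (rule summable_on_SigmaI[where g = "\<lambda>x. f x * infsum g B"])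
    fix x assume "x \<in> A"
    show "((\<lambda>y. f (fst (x, y)) * g (snd (x, y))) has_sum f x * infsum g B) B"
      using has_sum_cmult_right[OF has_sum_infsum[OF assms(2)]] by simp
  qed (use assms in \<open>auto intro: summable_on_cmult_left\<close>)
  then show ?thesis by (simp add: case_prod_unfold)
qed

lemma summable_on_nat_pairs_powr_sum:
  fixes \<sigma> :: real
  assumes "\<sigma> > 2"
  shows "(\<lambda>(m, n). real (m + n) powr (-\<sigma>)) summable_on ({1..} \<times> {1..} :: (nat \<times> nat) set)"
proof -
  have "(\<lambda>k. real k powr (-(\<sigma>/2))) summable_on {1::nat..}"
    using assms by (intro summable_on_subset_banach[OF summable_nonneg_imp_summable_on])
      (auto simp: summable_real_powr_iff)
  then have "(\<lambda>(m, n). real m powr (-(\<sigma>/2)) * real n powr (-(\<sigma>/2)))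
      summable_on ({1::nat..} \<times> {1..})"
    by (intro summable_on_product_nonneg) auto
  then show ?thesis
  proof (rule summable_on_comparison_test)
    fix x :: "nat \<times> nat" assume "x \<in> {1..} \<times> {1..}"
    then obtain m n where mn: "x = (m, n)" "m \<ge> 1" "n \<ge> 1" by auto
    have "real m * real n \<le> real (m + n) powr 2"
      by (simp add: power2_eq_square algebra_simps)
    then have "(real m * real n) powr (\<sigma>/2) \<le> (real (m + n) powr 2) powr (\<sigma>/2)"
      using assms by (intro powr_mono2) auto
    also have "\<dots> = real (m + n) powr \<sigma>"
      by (subst powr_powr) simp
    finally have "inverse (real (m + n) powr \<sigma>) \<le> inverse (real m powr (\<sigma>/2) * real n powr (\<sigma>/2))"
      using mn by (intro le_imp_inverse_le) (auto simp: powr_mult)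
    then show "(case x of (m, n) \<Rightarrow> real (m + n) powr -\<sigma>)
        \<le> (case x of (m, n) \<Rightarrow> real m powr -(\<sigma>/2) * real n powr -(\<sigma>/2))"
      using mn by (simp add: powr_minus)
  qed auto
qed

lemma summable_on_nat_pairs_if_norm_le:
  fixes f :: "nat \<times> nat \<Rightarrow> 'a::banach" and \<sigma> :: real
  assumes "\<sigma> > 2" "\<And>m n. 1 \<le> m \<Longrightarrow> 1 \<le> n \<Longrightarrow> norm (f (m, n)) \<le> real (m + n) powr (-\<sigma>)"
  shows "f summable_on {1..} \<times> {1..}"
proof (rule abs_summable_summable,
    rule summable_on_comparison_test[OF summable_on_nat_pairs_powr_sum[OF assms(1)]])
  fix x :: "nat \<times> nat" assume "x \<in> {1..} \<times> {1..}"
  then show "norm (f x) \<le> (case x of (m, n) \<Rightarrow> real (m + n) powr -\<sigma>)"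
    using assms(2) by (auto split: prod.split)
qed simp

definition tornheim_term :: "complex \<Rightarrow> complex \<Rightarrow> complex \<Rightarrow> nat \<times> nat \<Rightarrow> complex" where
  "tornheim_term s1 s2 s = (\<lambda>(m, n). of_nat m powr (-s1) * of_nat n powr (-s2) * of_nat (m + n) powr (-s))"

lemma tornheim_eq_infsum: "tornheim s1 s2 s = infsum (tornheim_term s1 s2 s) ({1..} \<times> {1..})"
  by (simp add: tornheim_def tornheim_term_def)

lemma norm_of_nat_powr: "norm (of_nat m powr z :: complex) = real m powr Re z"
  by (subst norm_powr_real_powr) auto

lemma tornheim_term_summable:
  assumes "Re s1 \<le> 0" "Re s2 \<le> 0" "Re (s1 + s2 + s) > 2"
  shows "tornheim_term s1 s2 s summable_on {1..} \<times> {1..}"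
proof (rule summable_on_nat_pairs_if_norm_le[OF assms(3)])
  fix m n :: nat assume "1 \<le> m" "1 \<le> n"
  then have "real m powr (- Re s1) * real n powr (- Re s2) * real (m + n) powr (- Re s)
      \<le> real (m + n) powr (- Re s1) * real (m + n) powr (- Re s2) * real (m + n) powr (- Re s)"
    using assms by (intro mult_right_mono mult_mono powr_mono2) auto
  also have "\<dots> = real (m + n) powr (- Re (s1 + s2 + s))"
    by (simp add: powr_add[symmetric])
  finally show "norm (tornheim_term s1 s2 s (m, n)) \<le> real (m + n) powr (- Re (s1 + s2 + s))"
    by (simp add: tornheim_term_def norm_mult norm_of_nat_powr del: of_nat_add)
qed

lemma tornheim_swap: "tornheim s1 s2 s = tornheim s2 s1 s"
proof -
  let ?U = "{1::nat..} \<times> {1::nat..}"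
  have "tornheim s1 s2 s = infsum (tornheim_term s2 s1 s \<circ> prod.swap) ?U"
    unfolding tornheim_eq_infsum
    by (intro infsum_cong) (simp add: tornheim_term_def split_beta mult_ac add.commute)
  also have "\<dots> = infsum (tornheim_term s2 s1 s) (prod.swap ` ?U)"
    by (rule infsum_reindex[symmetric]) simp
  also have "\<dots> = tornheim s2 s1 s"
    by (simp add: tornheim_eq_infsum product_swap)
  finally show ?thesis .
qed

lemma has_sum_sum:
  fixes f :: "'i \<Rightarrow> 'a \<Rightarrow> 'b::topological_comm_monoid_add"
  assumes "finite I" "\<And>i. i \<in> I \<Longrightarrow> (f i has_sum S i) A"
  shows "((\<lambda>x. \<Sum>i\<in>I. f i x) has_sum (\<Sum>i\<in>I. S i)) A"
  using assms by (induction I rule: finite_induct) (auto intro: has_sum_add)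

lemma infsum_sum:
  fixes f :: "'i \<Rightarrow> 'a \<Rightarrow> 'b::{topological_comm_monoid_add, t2_space}"
  assumes "finite I" "\<And>i. i \<in> I \<Longrightarrow> f i summable_on A"
  shows "infsum (\<lambda>x. \<Sum>i\<in>I. f i x) A = (\<Sum>i\<in>I. infsum (f i) A)"
  using assms by (intro infsumI has_sum_sum) auto

lemma EZ_zeta2_eq_tornheim: "EZ_zeta2 s1 s2 = tornheim s1 0 s2"
proof -
  let ?U = "{1::nat..} \<times> {1::nat..}"
  define h :: "nat \<times> nat \<Rightarrow> nat \<times> nat" where "h = (\<lambda>(m, n). (m, m + n))"
  have "h ` ?U = {(n1, n2). 1 \<le> n1 \<and> n1 < n2}"
  proof (intro equalityI subsetI)
    fix p assume "p \<in> {(n1, n2). 1 \<le> n1 \<and> n1 < (n2::nat)}"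
    then obtain a b where "p = (a, b)" "1 \<le> a" "a < b" by auto
    then show "p \<in> h ` ?U"
      by (intro image_eqI[of _ _ "(a, b - a)"]) (auto simp: h_def)
  qed (auto simp: h_def)
  then have "EZ_zeta2 s1 s2
      = infsum (\<lambda>(n1, n2). of_nat n1 powr (-s1) * of_nat n2 powr (-s2)) (h ` ?U)"
    by (simp add: EZ_zeta2_def)
  also have "\<dots> = infsum ((\<lambda>(n1, n2). of_nat n1 powr (-s1) * of_nat n2 powr (-s2)) \<circ> h) ?U"
    by (rule infsum_reindex) (auto simp: h_def inj_on_def)
  also have "\<dots> = tornheim s1 0 s2"
    unfolding tornheim_eq_infsum by (intro infsum_cong) (auto simp: h_def tornheim_term_def)
  finally show ?thesis .
qed

lemma acoef_term_eq_tornheim_term: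
  assumes "1 \<le> m" "1 \<le> n"
  shows "of_int (acoef (c + 1) (d + 1)) * (of_nat m * of_nat n) ^ d * of_nat (m + n) ^ (c - 2 * d)
           * of_nat (m + n) powr (-(s + of_nat c))
         = of_int (acoef (c + 1) (d + 1))
             * tornheim_term (- of_nat d) (- of_nat d) (s + 2 * of_nat d) (m, n)"
proof (cases "2 * d \<le> c")
  case True
  have exponent: "-(s + 2 * of_nat d) = of_nat (c - 2 * d) + (-(s + of_nat c))"
    using True by (simp add: of_nat_diff algebra_simps)
  have "of_nat (m + n) ^ (c - 2 * d) * of_nat (m + n) powr (-(s + of_nat c))
      = of_nat (m + n) powr of_nat (c - 2 * d) * (of_nat (m + n) powr (-(s + of_nat c)) :: complex)"
    using assms by (simp add: powr_nat' del: of_nat_add)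
  also have "\<dots> = of_nat (m + n) powr (-(s + 2 * of_nat d))"
    unfolding exponent by (rule powr_add[symmetric])
  finally have "of_nat (m + n) ^ (c - 2 * d) * of_nat (m + n) powr (-(s + of_nat c))
      = (of_nat (m + n) powr (-(s + 2 * of_nat d)) :: complex)" .
  with assms show ?thesis
    by (simp add: tornheim_term_def powr_nat' power_mult_distrib algebra_simps del: of_nat_add)
next
  case False
  then show ?thesis by (simp add: acoef_eq_0)
qed

lemma tornheim_term_power_sum:
  assumes "1 \<le> c" "c < 2 * N" "1 \<le> m" "1 \<le> n"
  shows "tornheim_term (- of_nat c) 0 (s + of_nat c) (m, n)
      + tornheim_term 0 (- of_nat c) (s + of_nat c) (m, n)
    = (\<Sum>d = 1..N. of_int (acoef (c + 1) d) *
        tornheim_term (1 - of_nat d) (1 - of_nat d) (s + 2 * of_nat d - 2) (m, n))"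
proof -
  let ?x = "of_nat m :: complex" and ?y = "of_nat n :: complex"
  have "tornheim_term (- of_nat c) 0 (s + of_nat c) (m, n)
      + tornheim_term 0 (- of_nat c) (s + of_nat c) (m, n)
      = (?x ^ c + ?y ^ c) * (?x + ?y) powr (-(s + of_nat c))"
    using assms by (simp add: tornheim_term_def powr_nat' algebra_simps)
  also have "\<dots> = acoef_poly N c (?x + ?y) (?x * ?y) * (?x + ?y) powr (-(s + of_nat c))"
    by (simp only: power_sum_eq_acoef_poly[OF assms(1,2)])
  also have "\<dots> = (\<Sum>d<N. of_int (acoef (c + 1) (d + 1)) * (?x * ?y) ^ d
                     * (?x + ?y) ^ (c - 2 * d) * (?x + ?y) powr (-(s + of_nat c)))"
    by (simp only: acoef_poly_def sum_distrib_right)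
  also have "\<dots> = (\<Sum>d<N. of_int (acoef (c + 1) (d + 1)) *
                     tornheim_term (- of_nat d) (- of_nat d) (s + 2 * of_nat d) (m, n))"
    using assms(3,4) by (simp only: acoef_term_eq_tornheim_term of_nat_add[symmetric])
  also have "\<dots> = (\<Sum>d = 1..N. of_int (acoef (c + 1) d) *
                     tornheim_term (1 - of_nat d) (1 - of_nat d) (s + 2 * of_nat d - 2) (m, n))"
    by (simp add: sum.atLeast1_atMost_eq algebra_simps)
  finally show ?thesis .
qed

theorem proposition3p3:
  fixes N' c :: nat and s :: complex
  assumes "1 \<le> N'" and "1 \<le> c" and "c \<le> 2 * N' - 1" and "Re s > 2"
  shows "EZ_zeta2 (- of_nat c) (s + of_nat c) =
    (\<Sum>d = 1..N'. (of_int (acoef (c + 1) d) / 2) *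
        tornheim (1 - of_nat d) (1 - of_nat d) (s + 2 * of_nat d - 2))"
proof -
  let ?U = "{1::nat..} \<times> {1::nat..}" and ?sc = "s + of_nat c"
  let ?T = "\<lambda>d. tornheim_term (1 - of_nat d) (1 - of_nat d) (s + 2 * of_nat d - 2)"
  have "c < 2 * N'" using assms(1,3) by linarith
  have summable_EZ: "tornheim_term (- of_nat c) 0 ?sc summable_on ?U"
    "tornheim_term 0 (- of_nat c) ?sc summable_on ?U"
    by (rule tornheim_term_summable; use assms(4) in simp)+
  have summable_T: "(\<lambda>x. of_int (acoef (c + 1) d) * ?T d x) summable_on ?U" if "d \<in> {1..N'}" for d
    using that assms(4) by (intro summable_on_cmult_right tornheim_term_summable) auto
  have "2 * EZ_zeta2 (- of_nat c) ?sc = tornheim (- of_nat c) 0 ?sc + tornheim 0 (- of_nat c) ?sc"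
    unfolding EZ_zeta2_eq_tornheim mult_2 by (subst (2) tornheim_swap) (rule refl)
  also have "\<dots> = infsum (\<lambda>x. tornheim_term (- of_nat c) 0 ?sc x
      + tornheim_term 0 (- of_nat c) ?sc x) ?U"
    unfolding tornheim_eq_infsum by (rule infsum_add[symmetric]) (fact summable_EZ)+
  also have "\<dots> = infsum (\<lambda>x. \<Sum>d = 1..N'. of_int (acoef (c + 1) d) * ?T d x) ?U"
    using tornheim_term_power_sum[OF assms(2) \<open>c < 2 * N'\<close>] by (intro infsum_cong) auto
  also have "\<dots> = (\<Sum>d = 1..N'. infsum (\<lambda>x. of_int (acoef (c + 1) d) * ?T d x) ?U)"
    by (rule infsum_sum[OF finite_atLeastAtMost summable_T])
  also have "\<dots> = (\<Sum>d = 1..N'. of_int (acoef (c + 1) d)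
      * tornheim (1 - of_nat d) (1 - of_nat d) (s + 2 * of_nat d - 2))"
    by (simp only: infsum_cmult_right' tornheim_eq_infsum)
  finally show ?thesis by (simp add: sum_divide_distrib[symmetric] eq_divide_eq mult.commute)
qed

end
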